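(* In the setting described in the context, let $(u_1,\dots,u_n)\in C(U,W,\alpha)$ and set $\alpha_0=p_1-1$. Then: (1) for $i\in[n]$ and $j\in[0,i]$, $u_i([a,\alpha_j])\subseteq[a,j]$; (2) for every $i\in[n]$, $u_i^{-1}(i)\ge p_i$; (3) for every $i\in[n]$, $u_1^{-1}(i)=u_2^{-1}(i)=\cdots=u_i^{-1}(i)$.
   Context: Permutations: for integers $a\le n$, $S_{[a,n]}$ is the set of bijections of $\mathbb Z$ fixing every integer outside $[a,n]$, one-line notation $[w(a),\dots,w(n)]$; $\tau_{i,j}$ swaps $i<j$, $u\tau_{i,j}=u\circ\tau_{i,j}$; $\ell(u)$ = number of inversions; $u\lessdot_k u\tau_{i,j}$ if $i\le k<j$ and $\ell(u\tau_{i,j})=\ell(u)+1$; $u\xrightarrow{k}w$ if there is a chain $u=v_1\lessdot_k\cdots\lessdot_k v_s=w$ ($s\ge1$), $v_{t+1}=v_t\tau_{i_t,j_t}$, with $v_1(i_1)<\cdots<v_{s-1}(i_{s-1})$. For $\beta=(\beta_1,\dots,\beta_m)$, $C(u,w,\beta)$ is the set of $(v_1,\dots,v_{m+1})$ with $v_1=u$, $v_{m+1}=w$, $v_i\xrightarrow{\beta_i}v_{i+1}$. Setting: fix $a\le0<n$ and $A=\{(r,c):1\le r\le n,\ a\le c\le r\}$. Let $\gamma=(\gamma_N,\gamma_E,\gamma_S,\gamma_W)$ be a boundary condition of $A$: $\gamma_N(c)$ ($c\in[a,n]$) is the label of the pipe entering through the top edge of the top cell $(\max(c,1),c)$ of column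 $c$ or $\varnothing$; $\gamma_E(r)$ that of the pipe entering through the right edge of $(r,r)$ or $\varnothing$; $\gamma_S(c)$ that of the pipe exiting through the bottom edge of $(n,c)$ or $\varnothing$; $\gamma_W(r)$ that of the pipe exiting through the left edge of $(r,a)$ or $\varnothing$. Assume $\gamma_S(c)\ne\varnothing$ for $c\in[a,n]$, $\gamma_W(r)=\varnothing$ and $\gamma_N(r)\ne\varnothing$ for $r\in[n]$, and the non-$\varnothing$ values of $\gamma_N,\gamma_E$ are exactly $a,\dots,n$, increasing along the order: top edges of columns $a,\dots,1$, right edge of row 1, top edge of column 2, right edge of row 2, …, top edge of column $n$, right edge of row $n$ (the values of $\gamma_S$ are then also exactly $a,\dots,n$). Put $p_c=\gamma_N(c)$ ($c\in[n]$), $\alpha_i=p_{i+1}-1$ for $i\in[n-1]$, $\alpha=(\alpha_1,\dots,\alpha_{n-1})$. $P_r=\{w\in S_{[a,n]}:w(p_j)=j\ \forall j\in(r,n]\}$; $\iota_r:P_r\to S_{[a,r]}$ deletes the values $r+1,\dots,n$ from one-line notation. $W\in P_1$: $\iota_1(W)(\ell)=\gamma_N^{-1}(\ell)$ for $\ell\in[a,p_1]$ and $\iota_1(W)$ decreasing on $(p_1,1]$. $U\in S_{[a,n]}$: $U(\ell)=\gamma_S^{-1}(\ell)$ for $\ell\in[a,n]$. *)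

theory Defs
  imports Main
begin

definition perm_on :: "int \<Rightarrow> int \<Rightarrow> (int \<Rightarrow> int) \<Rightarrow> bool" where
  "perm_on a n w \<longleftrightarrow> bij w \<and> (\<forall>x. (x < a \<or> n < x) \<longrightarrow> w x = x)"

definition tau :: "int \<Rightarrow> int \<Rightarrow> int \<Rightarrow> int" where
  "tau i j x = (if x = i then j else if x = j then i else x)"

definition inv_count :: "(int \<Rightarrow> int) \<Rightarrow> nat" where
  "inv_count u = card {(i, j). i < j \<and> u j < u i}"

definition kcover :: "int \<Rightarrow> (int \<Rightarrow> int) \<Rightarrow> int \<Rightarrow> int \<Rightarrow> bool" where
  "kcover k u i j \<longleftrightarrow> i \<le> k \<and> k < j \<and> inv_count (u \<circ> tau i j) = inv_count u + 1"

text \<open>u --k--> w: a chain v_1 = u, ..., v_s = w (s \<ge> 1) of k-covers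
  v_{t+1} = v_t tau_{i_t,j_t} with v_1(i_1) < ... < v_{s-1}(i_{s-1}).
  Lists are 0-indexed: vs ! t is v_{t+1}, ijs ! t is (i_{t+1}, j_{t+1}).\<close>
definition kchain :: "int \<Rightarrow> (int \<Rightarrow> int) \<Rightarrow> (int \<Rightarrow> int) \<Rightarrow> bool" where
  "kchain k u w \<longleftrightarrow>
    (\<exists>vs :: (int \<Rightarrow> int) list. \<exists>ijs :: (int \<times> int) list.
       length vs = Suc (length ijs) \<and> vs ! 0 = u \<and> last vs = w \<and>
       (\<forall>t < length ijs. kcover k (vs ! t) (fst (ijs ! t)) (snd (ijs ! t)) \<and>
                         vs ! Suc t = (vs ! t) \<circ> tau (fst (ijs ! t)) (snd (ijs ! t))) \<and>
       (\<forall>t. Suc t < length ijs \<longrightarrow>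
              (vs ! t) (fst (ijs ! t)) < (vs ! Suc t) (fst (ijs ! Suc t))))"

text \<open>Membership (v_1,...,v_{m+1}) \<in> C(u,w,beta), with beta indexed by 1..m and
  the tuple vs indexed by 1..m+1.\<close>
definition inC :: "(int \<Rightarrow> int) \<Rightarrow> (int \<Rightarrow> int) \<Rightarrow> int \<Rightarrow> (int \<Rightarrow> int) \<Rightarrow> (int \<Rightarrow> int \<Rightarrow> int) \<Rightarrow> bool" where
  "inC u w m beta vs \<longleftrightarrow> vs 1 = u \<and> vs (m + 1) = w \<and>
     (\<forall>i \<in> {1..m}. kchain (beta i) (vs i) (vs (i + 1)))"

text \<open>iota_r : P_r \<to> S_[a,r]: delete the values r+1,...,n from the one-line
  notation [w(a),...,w(n)]; the remaining word is the one-line notation on [a,r].\<close>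
definition iota_del :: "int \<Rightarrow> int \<Rightarrow> int \<Rightarrow> (int \<Rightarrow> int) \<Rightarrow> int \<Rightarrow> int" where
  "iota_del a n r w l =
     (if a \<le> l \<and> l \<le> r then filter (\<lambda>v. v \<le> r) (map w [a..n]) ! nat (l - a) else l)"

text \<open>Boundary edges of the incoming boundary (top edges of columns, right edges of rows)
  in the order: columns a,...,1, row 1, column 2, row 2, ..., column n, row n.
  Inl c = top edge of column c, Inr r = right edge of row r.\<close>
definition bd_edges :: "int \<Rightarrow> int \<Rightarrow> (int + int) list" where
  "bd_edges a n = map Inl [a..1] @ concat (map (\<lambda>r. [Inr r, Inl (r + 1)]) [1..n - 1]) @ [Inr n]"

definition bd_label :: "(int \<Rightarrow> int option) \<Rightarrow> (int \<Rightarrow> int option) \<Rightarrow> int + int \<Rightarrow> int option" where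
  "bd_label gN gE e = (case e of Inl c \<Rightarrow> gN c | Inr r \<Rightarrow> gE r)"

end

theory Submission
  imports Defs
begin

text \<open>
  Each cover in a k-chain exchanges two values v(s) < v(t) with s \<le> k < t. Hence values at
  positions \<le> k only grow, values at positions > k only shrink, and a value exceeding every
  final value at positions \<le> k never moves. As \<alpha> is increasing, for x \<le> \<alpha>_j and
  j \<le> i this gives u_i(x) \<le> u_n(x) = W(x), and W maps [a, \<alpha>_j] into [a, j] because
  W(p_c) = c for c \<ge> 2 and the column labels p_c increase; this is (1), and (2) is (1) with
  j = i - 1. By (1) for u_(m+1), the \<alpha>_m-chain from u_m to u_(m+1) only moves values \<le> m,
  so for m < i the value i occupies the same position in u_m and u_(m+1), which is (3).
\<close>

definition finitary_perm :: "(int \<Rightarrow> int) \<Rightarrow> bool" where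
  "finitary_perm v \<longleftrightarrow> (\<exists>L R. perm_on L R v)"

definition kstep :: "int \<Rightarrow> (int \<Rightarrow> int) \<Rightarrow> (int \<Rightarrow> int) \<Rightarrow> bool" where
  "kstep k v w \<longleftrightarrow> (\<exists>s t. kcover k v s t \<and> w = v \<circ> tau s t)"

lemma perm_on_in_range:
  assumes "perm_on L R v" "x \<in> {L..R}"
  shows "v x \<in> {L..R}"
proof (rule ccontr)
  assume out: "v x \<notin> {L..R}"
  then have "v (v x) = v x" using assms(1) unfolding perm_on_def by auto
  then have "v x = x" using assms(1) unfolding perm_on_def by (metis bij_pointE)
  then show False using out assms(2) by simp
qed

lemma perm_on_fixed:
  assumes "perm_on L R v" "x \<notin> {L..R}"
  shows "v x = x"
  using assms unfolding perm_on_def by auto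

lemma perm_on_ge_lower:
  assumes "perm_on L R v" "L \<le> x"
  shows "L \<le> v x"
proof (cases "x \<le> R")
  case True
  then show ?thesis using perm_on_in_range[OF assms(1), of x] assms(2) by simp
next
  case False
  then show ?thesis using perm_on_fixed[OF assms(1), of x] assms(2) by simp
qed

lemma finite_inversions_perm_on:
  assumes "perm_on L R v"
  shows "finite {(i, j). i < j \<and> v j < v i}"
proof -
  have moved: "v x = x \<or> (x \<in> {L..R} \<and> v x \<in> {L..R})" for x
    using perm_on_fixed[OF assms] perm_on_in_range[OF assms] by blast
  have "i \<in> {L..R} \<and> j \<in> {L..R}" if "i < j" "v j < v i" for i j
    using moved[of i] moved[of j] that by auto
  then have "{(i, j). i < j \<and> v j < v i} \<subseteq> {L..R} \<times> {L..R}" by auto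
  then show ?thesis by (rule finite_subset) simp
qed

lemma bij_tau: "bij (tau s t)"
  by (rule involuntory_imp_bij) (simp add: tau_def)

lemma perm_on_comp_tau:
  assumes "perm_on L R v" "s \<le> t"
  shows "perm_on (min L s) (max R t) (v \<circ> tau s t)"
  using assms bij_tau unfolding perm_on_def tau_def by (auto intro: bij_comp)

lemma inv_count_comp_tau_Suc_imp_less:
  assumes v: "perm_on L R v" and "s < t"
    and ic: "inv_count (v \<circ> tau s t) = inv_count v + 1"
  shows "v s < v t"
proof (rule ccontr)
  \<comment> \<open>If v t < v s, reordering the pairs of v \<circ> tau s t along tau s t maps its inversions
    injectively to inversions of v other than (s, t).\<close>
  assume "\<not> v s < v t"
  moreover have "v s \<noteq> v t" using v \<open>s < t\<close> unfolding perm_on_def by (metis bij_pointE less_irrefl)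
  ultimately have gt: "v t < v s" by auto
  define I1 where "I1 = {(i, j). i < j \<and> (v \<circ> tau s t) j < (v \<circ> tau s t) i}"
  define I0 where "I0 = {(i, j). i < j \<and> v j < v i}"
  define f where "f = (\<lambda>(i, j). if tau s t i < tau s t j then (tau s t i, tau s t j) else (i, j))"
  have fin: "finite I0" unfolding I0_def by (rule finite_inversions_perm_on[OF v])
  have "inj_on f I1"
    unfolding inj_on_def f_def I1_def tau_def by (auto split: if_splits)
  moreover have "f ` I1 \<subseteq> I0 - {(s, t)}"
    using gt \<open>s < t\<close> unfolding I1_def I0_def f_def tau_def by (auto split: if_splits)
  ultimately have "card I1 \<le> card (I0 - {(s, t)})"
    using fin by (metis card_image card_mono finite_Diff)
  also have "\<dots> < card I0" using fin gt \<open>s < t\<close> unfolding I0_def by (intro card_Diff1_less) auto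
  finally show False using ic unfolding inv_count_def I1_def I0_def by simp
qed

lemma kstep_finitary_perm:
  assumes "kstep k v w" "finitary_perm v"
  shows "finitary_perm w"
  using assms perm_on_comp_tau unfolding kstep_def kcover_def finitary_perm_def
  by (metis order.strict_trans1 less_imp_le)

lemma kcover_less:
  assumes "kcover k v s t" "finitary_perm v"
  shows "v s < v t"
  using assms inv_count_comp_tau_Suc_imp_less unfolding kcover_def finitary_perm_def
  by (meson order.strict_trans1)

lemma kstep_increases_left:
  assumes "kstep k v w" "finitary_perm v" "x \<le> k"
  shows "v x \<le> w x"
proof -
  obtain s t where st: "kcover k v s t" "w = v \<circ> tau s t" using assms(1) unfolding kstep_def by blast
  with kcover_less[OF st(1) assms(2)] assms(3) show ?thesis unfolding kcover_def tau_def by auto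
qed

lemma kstep_decreases_right:
  assumes "kstep k v w" "finitary_perm v" "k < x"
  shows "w x \<le> v x"
proof -
  obtain s t where st: "kcover k v s t" "w = v \<circ> tau s t" using assms(1) unfolding kstep_def by blast
  with kcover_less[OF st(1) assms(2)] assms(3) show ?thesis unfolding kcover_def tau_def by auto
qed

lemma kstep_keeps_large_values:
  assumes "kstep k v w" "finitary_perm v" "\<forall>x\<le>k. w x \<le> c" "c < v y"
  shows "w y = v y"
proof -
  obtain s t where st: "kcover k v s t" "w = v \<circ> tau s t" using assms(1) unfolding kstep_def by blast
  have "v t \<le> c" using assms(3) st unfolding kcover_def tau_def by force
  with kcover_less[OF st(1) assms(2)] assms(4) have "y \<noteq> s" "y \<noteq> t" by auto
  then show ?thesis using st(2) unfolding tau_def by simp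
qed

lemma kstep_rtranclp_finitary_perm:
  assumes "(kstep k)\<^sup>*\<^sup>* v w" "finitary_perm v"
  shows "finitary_perm w"
  using assms by induction (auto intro: kstep_finitary_perm)

lemma kstep_rtranclp_increases_left:
  assumes "(kstep k)\<^sup>*\<^sup>* v w" "finitary_perm v" "x \<le> k"
  shows "v x \<le> w x"
  using assms(1)
proof induction
  case (step y z)
  then show ?case
    using kstep_increases_left[OF step(2) kstep_rtranclp_finitary_perm[OF step(1) assms(2)] assms(3)]
    by simp
qed simp

lemma kstep_rtranclp_decreases_right:
  assumes "(kstep k)\<^sup>*\<^sup>* v w" "finitary_perm v" "k < x"
  shows "w x \<le> v x"
  using assms(1)
proof induction
  case (step y z)
  then show ?case
    using kstep_decreases_right[OF step(2) kstep_rtranclp_finitary_perm[OF step(1) assms(2)] assms(3)]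
    by simp
qed simp

lemma kstep_rtranclp_keeps_large_values:
  assumes "(kstep k)\<^sup>*\<^sup>* v w" "finitary_perm v" "\<forall>x\<le>k. w x \<le> c" "c < v y"
  shows "w y = v y"
  using assms(1,3)
proof induction
  case (step y' z)
  have y': "finitary_perm y'" using kstep_rtranclp_finitary_perm[OF step(1) assms(2)] .
  have "\<forall>x\<le>k. y' x \<le> c"
    using step(4) kstep_increases_left[OF step(2) y'] by (meson order_trans)
  then have "y' y = v y" using step(3) by blast
  then show ?case using kstep_keeps_large_values[OF step(2) y' step(4)] assms(4) by simp
qed simp

lemma kchain_imp_kstep_rtranclp:
  assumes "kchain k v w"
  shows "(kstep k)\<^sup>*\<^sup>* v w"
proof -
  obtain vs :: "(int \<Rightarrow> int) list" and ijs :: "(int \<times> int) list" where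
    vs: "length vs = Suc (length ijs)" "vs ! 0 = v" "last vs = w"
    and steps: "\<forall>t < length ijs. kcover k (vs ! t) (fst (ijs ! t)) (snd (ijs ! t)) \<and>
                   vs ! Suc t = (vs ! t) \<circ> tau (fst (ijs ! t)) (snd (ijs ! t))"
    using assms unfolding kchain_def by blast
  have "(kstep k)\<^sup>*\<^sup>* v (vs ! m)" if "m \<le> length ijs" for m
    using that
  proof (induction m)
    case (Suc m)
    then have "m < length ijs" by simp
    then have "kstep k (vs ! m) (vs ! Suc m)" using steps unfolding kstep_def by blast
    with Suc show ?case by (simp add: rtranclp.rtrancl_into_rtrancl)
  qed (simp add: vs(2))
  moreover have "vs ! length ijs = w"
    using vs by (metis diff_Suc_1 last_conv_nth list.size(3) nat.distinct(1))
  ultimately show ?thesis by blast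
qed

lemma int_le_by_steps:
  fixes g :: "int \<Rightarrow> 'a::preorder"
  assumes steps: "\<And>m. i \<le> m \<Longrightarrow> m < j \<Longrightarrow> g m \<le> g (m + 1)" and "i \<le> j"
  shows "g i \<le> g j"
  using \<open>i \<le> j\<close> steps
proof (induction j rule: int_ge_induct)
  case (step j)
  have "g i \<le> g j" using step.IH step.prems by simp
  also have "g j \<le> g (j + 1)" using step.hyps step.prems by simp
  finally show ?case .
qed simp

text \<open>
  The data of the lemma: u_m \<rightarrow> u_(m+1) is an \<alpha>_m-chain for m \<in> [1, n), and the last
  assumption is conclusion (1) for i = n.
\<close>

locale chain_walk =
  fixes a n :: int and alpha :: "int \<Rightarrow> int" and u :: "int \<Rightarrow> int \<Rightarrow> int"
  assumes a_nonpos: "a \<le> 0"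
    and start_perm: "perm_on a n (u 1)"
    and end_perm: "perm_on a n (u n)"
    and walk_step: "\<And>m. m \<in> {1..<n} \<Longrightarrow> (kstep (alpha m))\<^sup>*\<^sup>* (u m) (u (m + 1))"
    and alpha_range: "\<And>m. m \<in> {1..<n} \<Longrightarrow> alpha m \<in> {a..<n}"
    and alpha_mono: "mono_on {0..<n} alpha"
    and end_maps_initial_segments: "\<And>j. j \<in> {0..<n} \<Longrightarrow> u n ` {a..alpha j} \<subseteq> {a..j}"
begin

lemma finitary_perm_u:
  assumes "i \<in> {1..n}"
  shows "finitary_perm (u i)"
proof -
  have "1 \<le> i" using assms by simp
  then show ?thesis
    using assms
  proof (induction i rule: int_ge_induct)
    case base
    then show ?case using start_perm unfolding finitary_perm_def by blast
  next
    case (step m)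
    then show ?case using kstep_rtranclp_finitary_perm[OF walk_step] by simp
  qed
qed

lemma u_increases_left:
  assumes "1 \<le> i" "i \<le> j" "j \<le> n" "\<forall>m\<in>{i..<j}. x \<le> alpha m"
  shows "u i x \<le> u j x"
proof (rule int_le_by_steps[where g = "\<lambda>m. u m x"])
  fix m assume "i \<le> m" "m < j"
  then show "u m x \<le> u (m + 1) x"
    using assms kstep_rtranclp_increases_left[OF walk_step finitary_perm_u] by simp
qed (use assms in simp)

lemma u_decreases_right:
  assumes "1 \<le> i" "i \<le> j" "j \<le> n" "\<forall>m\<in>{i..<j}. alpha m < x"
  shows "u j x \<le> u i x"
proof -
  have "- u i x \<le> - u j x"
  proof (rule int_le_by_steps[where g = "\<lambda>m. - u m x"])
    fix m assume "i \<le> m" "m < j"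
    then show "- u m x \<le> - u (m + 1) x"
      using assms kstep_rtranclp_decreases_right[OF walk_step finitary_perm_u] by simp
  qed (use assms in simp)
  then show ?thesis by simp
qed

lemma perm_on_u:
  assumes i: "i \<in> {1..n}"
  shows "perm_on a n (u i)"
proof -
  have "u i x = x" if x: "x \<notin> {a..n}" for x
  proof -
    have ends: "u 1 x = x" "u n x = x"
      using perm_on_fixed[OF start_perm x] perm_on_fixed[OF end_perm x] by simp_all
    show ?thesis
    proof (cases "x < a")
      case True
      then have "\<forall>m\<in>{1..<n}. x \<le> alpha m" using alpha_range by fastforce
      then have "u 1 x \<le> u i x" "u i x \<le> u n x"
        using i by (auto intro!: u_increases_left)
      then show ?thesis using ends by simp
    next
      case False
      then have "\<forall>m\<in>{1..<n}. alpha m < x" using alpha_range x by fastforce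
      then have "u i x \<le> u 1 x" "u n x \<le> u i x"
        using i by (auto intro!: u_decreases_right)
      then show ?thesis using ends by simp
    qed
  qed
  moreover have "bij (u i)"
    using finitary_perm_u[OF i] unfolding finitary_perm_def perm_on_def by blast
  ultimately show ?thesis unfolding perm_on_def by auto
qed

lemma u_maps_initial_segments:
  assumes i: "i \<in> {1..n}" and j: "j \<in> {0..min i (n - 1)}"
  shows "u i ` {a..alpha j} \<subseteq> {a..j}"
proof clarify
  fix x assume x: "x \<in> {a..alpha j}"
  have "x \<le> alpha m" if "m \<in> {i..<n}" for m
    using that i j x mono_onD[OF alpha_mono, of j m] by auto
  then have "u i x \<le> u n x" using i by (intro u_increases_left) auto
  moreover have "u n x \<in> {a..j}" using end_maps_initial_segments[of j] j x by fastforce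
  moreover have "a \<le> u i x" using perm_on_ge_lower[OF perm_on_u[OF i]] x by simp
  ultimately show "u i x \<in> {a..j}" by simp
qed

lemma u_inv_u:
  assumes "i \<in> {1..n}"
  shows "u i (inv (u i) c) = c"
  using perm_on_u[OF assms] unfolding perm_on_def by (simp add: bij_is_surj surj_f_inv_f)

lemma alpha_less_inv_u:
  assumes i: "i \<in> {1..n}"
  shows "alpha (i - 1) < inv (u i) i"
proof -
  define y where "y = inv (u i) i"
  have uy: "u i y = i" unfolding y_def using u_inv_u[OF i] .
  have "a \<le> y"
  proof (rule ccontr)
    assume "\<not> a \<le> y"
    then have "u i y = y" using perm_on_fixed[OF perm_on_u[OF i]] by simp
    then show False using uy \<open>\<not> a \<le> y\<close> a_nonpos i by simp
  qed
  moreover have "y \<notin> {a..alpha (i - 1)}"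
  proof
    assume "y \<in> {a..alpha (i - 1)}"
    then have "u i y \<in> {a..i - 1}"
      using u_maps_initial_segments[OF i, of "i - 1"] i by (auto simp: image_subset_iff)
    then show False using uy by simp
  qed
  ultimately show ?thesis unfolding y_def by simp
qed

lemma inv_u_step:
  assumes m: "m \<in> {1..<n}" and "m < c"
  shows "inv (u (m + 1)) c = inv (u m) c"
proof -
  have m1: "m + 1 \<in> {1..n}" using m by simp
  have small: "\<forall>x\<le>alpha m. u (m + 1) x \<le> m"
  proof (intro allI impI)
    fix x assume x: "x \<le> alpha m"
    show "u (m + 1) x \<le> m"
    proof (cases "a \<le> x")
      case True
      then show ?thesis using u_maps_initial_segments[OF m1, of m] m x by (auto simp: image_subset_iff)
    next
      case False
      then show ?thesis using perm_on_fixed[OF perm_on_u[OF m1]] m a_nonpos by auto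
    qed
  qed
  have "u m (inv (u m) c) = c" using u_inv_u m by simp
  then have "u (m + 1) (inv (u m) c) = c"
    using kstep_rtranclp_keeps_large_values[OF walk_step[OF m] finitary_perm_u small] m \<open>m < c\<close>
    by simp
  then show ?thesis using perm_on_u[OF m1] unfolding perm_on_def by (simp add: bij_is_inj inv_f_eq)
qed

lemma inv_u_eq:
  assumes i: "i \<in> {1..n}" and k: "k \<in> {1..i}"
  shows "inv (u k) i = inv (u 1) i"
proof -
  have "1 \<le> k" using k by simp
  then show ?thesis
    using k
  proof (induction k rule: int_ge_induct)
    case (step m)
    then show ?case using inv_u_step[of m i] i by simp
  qed simp
qed

end

lemma in_set_map_filter:
  assumes "y \<in> set xs" "g y = Some v"
  shows "v \<in> set (List.map_filter g xs)"
  using assms unfolding map_filter_def by (force simp: image_iff)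

lemma sorted_map_filter_less:
  assumes "sorted_wrt (<) (List.map_filter g (A @ x # B))"
    and "g x = Some v" "y \<in> set B" "g y = Some v'"
  shows "v < v'"
proof -
  have "List.map_filter g (A @ x # B) = List.map_filter g A @ v # List.map_filter g B"
    using assms(2) by (simp add: map_filter_def)
  then show ?thesis
    using assms(1) in_set_map_filter[of y B g v', OF assms(3,4)] by (auto simp: sorted_wrt_append)
qed

lemma column_in_bd_edges:
  assumes "a \<le> 1" "c \<in> {1..n}"
  shows "Inl c \<in> set (bd_edges a n)"
proof (cases "c = 1")
  case True
  then show ?thesis using assms unfolding bd_edges_def by auto
next
  case False
  then have "c - 1 \<in> set [1..n - 1]" using assms by auto
  then show ?thesis unfolding bd_edges_def by (force intro: bexI[of _ "c - 1"])
qed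

lemma bd_edges_column_before:
  assumes "a \<le> 1" "1 \<le> c" "c < c'" "c' \<le> n"
  obtains A B where "bd_edges a n = A @ Inl c # B" "Inl c' \<in> set B"
proof -
  define f where "f = (\<lambda>r::int. [Inr r, Inl (r + 1) :: int + int])"
  have later: "Inl c' \<in> set (concat (map f [r..n - 1]))" if "r < c'" for r
  proof -
    have "c' - 1 \<in> set [r..n - 1]" using that assms by simp
    then show ?thesis unfolding f_def by (auto intro!: bexI[of _ "c' - 1"])
  qed
  show ?thesis
  proof (cases "c = 1")
    case True
    have "[a..1] = [a..0] @ [1]" using assms upto_rec2[of a 1] by simp
    then have "bd_edges a n = map Inl [a..0] @ Inl c # (concat (map f [1..n - 1]) @ [Inr n])"
      unfolding bd_edges_def f_def using True by simp
    moreover have "Inl c' \<in> set (concat (map f [1..n - 1]) @ [Inr n])"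
      using later[of 1] True assms by simp
    ultimately show ?thesis by (rule that)
  next
    case False
    have "[1..n - 1] = [1..c - 2] @ (c - 1) # [c..n - 1]"
      using upto_split3[of 1 "c - 1" "n - 1"] assms False by simp
    then have "bd_edges a n = (map Inl [a..1] @ concat (map f [1..c - 2]) @ [Inr (c - 1)])
        @ Inl c # (concat (map f [c..n - 1]) @ [Inr n])"
      unfolding bd_edges_def f_def[symmetric] by (simp add: f_def)
    moreover have "Inl c' \<in> set (concat (map f [c..n - 1]) @ [Inr n])"
      using later[of c] assms by simp
    ultimately show ?thesis by (rule that)
  qed
qed

lemma column_labels_in_range:
  assumes "a \<le> 1" "List.map_filter (bd_label gN gE) (bd_edges a n) = [a..n]"
    and "c \<in> {1..n}" "gN c = Some l"
  shows "l \<in> {a..n}"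
  using in_set_map_filter[OF column_in_bd_edges[OF assms(1,3)], of "bd_label gN gE"] assms(2,4)
  by (simp add: bd_label_def)

lemma column_labels_strict_mono:
  assumes "a \<le> 1" and in_order: "List.map_filter (bd_label gN gE) (bd_edges a n) = [a..n]"
    and labels: "\<forall>c\<in>{1..n}. gN c = Some (p c)"
  shows "strict_mono_on {1..n} p"
proof (rule strict_mono_onI)
  fix c c' assume c: "c \<in> {1..n}" and c': "c' \<in> {1..n}" and "c < c'"
  then obtain A B where AB: "bd_edges a n = A @ Inl c # B" "Inl c' \<in> set B"
    using bd_edges_column_before[OF assms(1), of c c' n] by auto
  have "bd_label gN gE (Inl c) = Some (p c)" "bd_label gN gE (Inl c') = Some (p c')"
    using labels c c' by (simp_all add: bd_label_def)
  then show "p c < p c'"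
    using sorted_map_filter_less[of "bd_label gN gE" A "Inl c" B] in_order AB by simp
qed

lemma shifted_labels_mono_on:
  fixes p :: "int \<Rightarrow> int" and n :: int
  assumes "strict_mono_on {1..n} p"
  shows "mono_on {0..<n} (\<lambda>i. p (i + 1) - 1)"
proof (rule mono_onI)
  fix r s :: int assume "r \<in> {0..<n}" "s \<in> {0..<n}" "r \<le> s"
  then show "p (r + 1) - 1 \<le> p (s + 1) - 1"
    using strict_mono_on_leD[OF assms, of "r + 1" "s + 1"] by simp
qed

lemma shifted_labels_in_range:
  fixes p :: "int \<Rightarrow> int" and a n :: int
  assumes "strict_mono_on {1..n} p" "\<forall>c\<in>{1..n}. p c \<in> {a..n}" "m \<in> {1..<n}"
  shows "p (m + 1) - 1 \<in> {a..<n}"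
proof -
  have "1 \<in> {1..n}" "m + 1 \<in> {1..n}" using assms(3) by auto
  then have "a \<le> p 1" "p (m + 1) \<le> n" "p 1 < p (m + 1)"
    using assms(2) strict_mono_onD[OF assms(1)] assms(3) by auto
  then show ?thesis by simp
qed

lemma iota_del_eq_on_prefix:
  assumes "a \<le> x" "x \<le> n" "x \<le> r" "\<forall>y\<in>{a..x}. w y \<le> r"
  shows "iota_del a n r w x = w x"
proof -
  have split: "[a..n] = [a..x] @ [x + 1..n]" using upto_split2[of a x n] assms by simp
  have prefix: "filter (\<lambda>v. v \<le> r) (map w [a..x]) = map w [a..x]"
    using assms(4) by (auto intro: filter_True)
  have len: "nat (x - a) < length (map w [a..x])" using assms by simp
  have "filter (\<lambda>v. v \<le> r) (map w [a..n]) ! nat (x - a) = map w [a..x] ! nat (x - a)"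
    unfolding split map_append filter_append prefix using len by (simp add: nth_append)
  also have "\<dots> = w x" using len assms by simp
  finally show ?thesis using assms unfolding iota_del_def by simp
qed

lemma P1_perm_column:
  assumes W: "perm_on a n W" and W_P1: "\<forall>j\<in>{2..n}. W (p j) = j"
    and "y \<in> {a..n}" "2 \<le> W y"
  shows "y = p (W y)"
proof -
  have "W y \<le> n" using perm_on_in_range[OF W] assms(3) by simp
  then have "W (p (W y)) = W y" using W_P1 assms(4) by simp
  then show ?thesis using W unfolding perm_on_def by (metis bij_pointE)
qed

text \<open>
  Below p_1 the permutation W takes only values \<le> 1, so iota_1 W agrees with W there: W x is a
  column whose top label is x, and it cannot be column 1, whose label is p_1.
\<close>

lemma P1_perm_first_block:
  assumes W: "perm_on a n W" and "0 < n"
    and labels: "\<forall>c\<in>{1..n}. gN c = Some (p c)"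
    and p_mono: "strict_mono_on {1..n} p" and p_range: "\<forall>c\<in>{1..n}. p c \<in> {a..n}"
    and W_P1: "\<forall>j\<in>{2..n}. W (p j) = j"
    and W_init: "\<forall>l\<in>{a..p 1}. iota_del a n 1 W l \<in> {a..n} \<and> gN (iota_del a n 1 W l) = Some l"
    and x: "x \<in> {a..<p 1}"
  shows "W x \<le> 0"
proof -
  have p1: "p 1 \<le> n" "gN 1 = Some (p 1)" using p_range labels \<open>0 < n\<close> by auto
  have p1_less: "p 1 < p c" if "c \<in> {2..n}" for c
    using strict_mono_onD[OF p_mono, of 1 c] that by simp
  have W_le_1: "W y \<le> 1" if y: "y \<in> {a..x}" for y
  proof (rule ccontr)
    assume "\<not> W y \<le> 1"
    moreover have "y \<in> {a..n}" using y x p1 by simp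
    ultimately have "y = p (W y)" "W y \<in> {2..n}"
      using P1_perm_column[OF W W_P1] perm_on_in_range[OF W] by auto
    then show False using p1_less[of "W y"] y x by simp
  qed
  have "x \<le> 1"
  proof (rule ccontr)
    assume "\<not> x \<le> 1"
    then have "iota_del a n 1 W x = x" unfolding iota_del_def by simp
    then have "gN x = Some x" using W_init x by force
    moreover have "x \<in> {2..n}" using \<open>\<not> x \<le> 1\<close> x p1 by auto
    ultimately show False using labels p1_less[of x] x by auto
  qed
  then have "iota_del a n 1 W x = W x" using iota_del_eq_on_prefix W_le_1 x p1 by simp
  moreover have "x \<in> {a..p 1}" using x by simp
  ultimately have "gN (W x) = Some x" using W_init by force
  then have "W x \<noteq> 1" using p1 x by auto
  then show ?thesis using W_le_1[of x] x by simp
qed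

lemma P1_perm_maps_initial_segments:
  assumes W: "perm_on a n W"
    and labels: "\<forall>c\<in>{1..n}. gN c = Some (p c)"
    and p_mono: "strict_mono_on {1..n} p" and p_range: "\<forall>c\<in>{1..n}. p c \<in> {a..n}"
    and W_P1: "\<forall>j\<in>{2..n}. W (p j) = j"
    and W_init: "\<forall>l\<in>{a..p 1}. iota_del a n 1 W l \<in> {a..n} \<and> gN (iota_del a n 1 W l) = Some l"
    and j: "j \<in> {0..<n}"
  shows "W ` {a..p (j + 1) - 1} \<subseteq> {a..j}"
proof clarify
  fix x assume x: "x \<in> {a..p (j + 1) - 1}"
  have "p (j + 1) \<in> {a..n}" using p_range j by simp
  then have "x \<le> n" using x by simp
  have "W x \<le> j"
  proof (cases "2 \<le> W x")
    case True
    have Wx: "W x \<le> n" using perm_on_in_range[OF W] x \<open>x \<le> n\<close> by simp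
    have x_eq: "x = p (W x)" using P1_perm_column[OF W W_P1] x \<open>x \<le> n\<close> True by simp
    show ?thesis
    proof (rule ccontr)
      assume "\<not> W x \<le> j"
      then have "p (j + 1) \<le> p (W x)" using strict_mono_on_leD[OF p_mono] j Wx by simp
      then show False using x_eq x by simp
    qed
  next
    case False
    show ?thesis
    proof (cases "j = 0")
      case True
      then show ?thesis
        using P1_perm_first_block[OF W _ labels p_mono p_range W_P1 W_init] j x by simp
    next
      case False
      then show ?thesis using \<open>\<not> 2 \<le> W x\<close> j by simp
    qed
  qed
  moreover have "a \<le> W x" using perm_on_ge_lower[OF W] x by simp
  ultimately show "W x \<in> {a..j}" by simp
qed

theorem lemma4p28:
  fixes a n :: int
    and gN gE gS gW :: "int \<Rightarrow> int option"
    and U W :: "int \<Rightarrow> int"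
    and u :: "int \<Rightarrow> int \<Rightarrow> int"
    and p alpha :: "int \<Rightarrow> int"
  assumes a_le: "a \<le> 0" and n_pos: "0 < n"
    and gS_def: "\<forall>c \<in> {a..n}. gS c \<noteq> None"
    and gW_none: "\<forall>r \<in> {1..n}. gW r = None"
    and gN_def: "\<forall>r \<in> {1..n}. gN r \<noteq> None"
    and in_order: "List.map_filter (bd_label gN gE) (bd_edges a n) = [a..n]"
    and gS_vals: "bij_betw (\<lambda>c. the (gS c)) {a..n} {a..n}"
    and p_def: "\<forall>c. p c = the (gN c)"
    and alpha_def: "\<forall>i. alpha i = p (i + 1) - 1"
    and U_perm: "perm_on a n U"
    and U_def: "\<forall>l \<in> {a..n}. gS (U l) = Some l"
    and W_perm: "perm_on a n W"
    and W_P1: "\<forall>j \<in> {2..n}. W (p j) = j"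
    and W_init: "\<forall>l \<in> {a..p 1}. iota_del a n 1 W l \<in> {a..n} \<and> gN (iota_del a n 1 W l) = Some l"
    and W_dec: "\<forall>x y. p 1 < x \<longrightarrow> x < y \<longrightarrow> y \<le> 1 \<longrightarrow> iota_del a n 1 W y < iota_del a n 1 W x"
    and u_C: "inC U W (n - 1) alpha u"
  shows "(\<forall>i \<in> {1..n}. \<forall>j \<in> {0..min i (n - 1)}. u i ` {a..alpha j} \<subseteq> {a..j})
       \<and> (\<forall>i \<in> {1..n}. p i \<le> inv (u i) i)
       \<and> (\<forall>i \<in> {1..n}. \<forall>k \<in> {1..i}. inv (u k) i = inv (u 1) i)"
proof -
  have labels: "\<forall>c\<in>{1..n}. gN c = Some (p c)" using gN_def p_def by auto
  have p_range: "\<forall>c\<in>{1..n}. p c \<in> {a..n}"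
    using column_labels_in_range[of a gN gE n] a_le in_order labels by auto
  have p_mono: "strict_mono_on {1..n} p"
    using a_le by (intro column_labels_strict_mono[OF _ in_order labels]) simp
  have alpha_eq: "alpha = (\<lambda>i. p (i + 1) - 1)" using alpha_def by auto
  interpret chain_walk a n alpha u
  proof
    show "a \<le> 0" by (fact a_le)
    show "perm_on a n (u 1)" "perm_on a n (u n)"
      using u_C U_perm W_perm unfolding inC_def by auto
    show "(kstep (alpha m))\<^sup>*\<^sup>* (u m) (u (m + 1))" if "m \<in> {1..<n}" for m
      using u_C that unfolding inC_def by (auto intro: kchain_imp_kstep_rtranclp)
    show "alpha m \<in> {a..<n}" if "m \<in> {1..<n}" for m
      using shifted_labels_in_range[OF p_mono p_range that] unfolding alpha_eq .
    show "mono_on {0..<n} alpha"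
      using shifted_labels_mono_on[OF p_mono] unfolding alpha_eq .
    show "u n ` {a..alpha j} \<subseteq> {a..j}" if "j \<in> {0..<n}" for j
      using P1_perm_maps_initial_segments[OF W_perm labels p_mono p_range W_P1 W_init that] u_C
      unfolding inC_def alpha_eq by simp
  qed
  have "p i \<le> inv (u i) i" if "i \<in> {1..n}" for i
    using alpha_less_inv_u[OF that] unfolding alpha_eq by simp
  then show ?thesis using u_maps_initial_segments inv_u_eq by blast
qed

end
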